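(* Let $a>0$, $\mu\in(0,1]$, $0<\lambda<1$ and let $\gamma$ be a local stable leaf. Then the $\theta_a$-diameter of $\mathcal D(\lambda a,\mu,\gamma)$ inside $\mathcal D(a,\mu,\gamma)$, i.e. $\sup\{\theta_a(\rho',\rho''):\rho',\rho''\in\mathcal D(\lambda a,\mu,\gamma)\}$, is at most $D(a):=4a+\log(\tau_2/\tau_1)<\infty$, where $\tau_1:=\inf\{\frac{z-z^{\lambda}}{z-z^{-\lambda}}:z>1\}$ and $\tau_2:=\sup\{\frac{z-z^{-\lambda}}{z-z^{\lambda}}:z>1\}$. In particular, if $\omega$, $a'>0$ and $a$ satisfy $\lambda:=(a'+\bar G(\omega))\lambda_s^\mu/a<1$, then for every leaf $\gamma$ and preimage leaf $\gamma_j$, $$\sup\{\theta_a(\mathscr L_j^\omega\rho',\mathscr L_j^\omega\rho''):\ \rho',\rho''\in\mathcal D(a',\mu,\gamma)\}\le D(a),$$ a bound independent of $\gamma$ and $\gamma_j$.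
   Context: Local stable leaves $\gamma$ of a uniformly hyperbolic set $\Lambda$ of a $C^2$ diffeomorphism $f$ of a compact Riemannian manifold (distance $d\le 1$ on the relevant open set $Q$), with induced Riemannian measures $m_\gamma$. $\mathcal D(a,\mu,\gamma):=\{\rho:\gamma\to\mathbb R:\ \rho>0,\ \rho(x)\le\rho(y)e^{a d(x,y)^\mu}\ \forall x,y\in\gamma\}$, and $\theta_a$ is its Hilbert projective metric: with $v\preceq w$ iff $w-v\in\mathcal D(a,\mu,\gamma)\cup\{0\}$, $\theta_a(v_1,v_2)=\log(\beta/\alpha)$ where $\alpha=\sup\{t>0:tv_1\preceq v_2\}$, $\beta=\inf\{s>0:v_2\preceq sv_1\}$. Constants: $0<\lambda_s<1$ with $d(fx,fy)\le\lambda_s d(x,y)$ on leaves; preimage leaves $\gamma_1,\dots,\gamma_n$ of $\gamma$ satisfy $\gamma\cap f(Q)=\bigcup_jf(\gamma_j)$; $\mathscr L_j^\omega\rho:=\frac{|\det D(f|_{\gamma_j})|}{|\det Df|}(\rho\circ f)(g(Y_1(\omega),\cdot)\circ f)$ on $\gamma_j$, with $g$ a nonnegative likelihood and $G(\omega)$ a log-Lipschitz constant of $g(Y_1(\omega),\cdot)$ on $Q$; $\bar G(\omega):=G(\omega)+(K_1+K_2)/\lambda_s^\mu$ with $K_1,K_2$ Lipschitz constants of $\log|\det Df|$ and $\log|\det D(f|_{\gamma_j})|$. *)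

theory Defs
  imports "HOL-Analysis.Analysis"
begin

text \<open>Functions on a leaf are modelled as total functions; only their values on
  the leaf (a set of points of a metric space) matter.\<close>

definition holder_cone :: "real \<Rightarrow> real \<Rightarrow> 'a::metric_space set \<Rightarrow> ('a \<Rightarrow> real) set" where
  "holder_cone a \<mu> \<gamma> = {\<rho>. (\<forall>x\<in>\<gamma>. 0 < \<rho> x) \<and>
      (\<forall>x\<in>\<gamma>. \<forall>y\<in>\<gamma>. \<rho> x \<le> \<rho> y * exp (a * dist x y powr \<mu>))}"

definition cone_le :: "real \<Rightarrow> real \<Rightarrow> 'a::metric_space set \<Rightarrow> ('a \<Rightarrow> real) \<Rightarrow> ('a \<Rightarrow> real) \<Rightarrow> bool" where
  "cone_le a \<mu> \<gamma> v w \<longleftrightarrow> (\<lambda>x. w x - v x) \<in> holder_cone a \<mu> \<gamma> \<or> (\<forall>x\<in>\<gamma>. w x - v x = 0)"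

definition theta_alpha_set where
  "theta_alpha_set a \<mu> \<gamma> v1 v2 = {t::real. 0 < t \<and> cone_le a \<mu> \<gamma> (\<lambda>x. t * v1 x) v2}"

definition theta_beta_set where
  "theta_beta_set a \<mu> \<gamma> v1 v2 = {s::real. 0 < s \<and> cone_le a \<mu> \<gamma> v2 (\<lambda>x. s * v1 x)}"

text \<open>Hilbert projective metric \<theta>_a = log(\<beta>/\<alpha>), valued in the extended reals:
  it is \<infinity> when \<alpha> = 0 (no t) or \<beta> = \<infinity> (no s).\<close>
definition hilbert_theta :: "real \<Rightarrow> real \<Rightarrow> 'a::metric_space set \<Rightarrow> ('a \<Rightarrow> real) \<Rightarrow> ('a \<Rightarrow> real) \<Rightarrow> ereal" where
  "hilbert_theta a \<mu> \<gamma> v1 v2 =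
     (if theta_alpha_set a \<mu> \<gamma> v1 v2 \<noteq> {} \<and> bdd_above (theta_alpha_set a \<mu> \<gamma> v1 v2)
         \<and> theta_beta_set a \<mu> \<gamma> v1 v2 \<noteq> {}
      then ereal (ln (Inf (theta_beta_set a \<mu> \<gamma> v1 v2) / Sup (theta_alpha_set a \<mu> \<gamma> v1 v2)))
      else \<infinity>)"

definition tau1_set :: "real \<Rightarrow> real set" where
  "tau1_set lam = {(z - z powr lam) / (z - z powr (-lam)) | z. z > 1}"

definition tau2_set :: "real \<Rightarrow> real set" where
  "tau2_set lam = {(z - z powr (-lam)) / (z - z powr lam) | z. z > 1}"

definition tau1 :: "real \<Rightarrow> real" where "tau1 lam = Inf (tau1_set lam)"
definition tau2 :: "real \<Rightarrow> real" where "tau2 lam = Sup (tau2_set lam)"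

definition Dbound :: "real \<Rightarrow> real \<Rightarrow> real" where
  "Dbound a lam = 4 * a + ln (tau2 lam / tau1 lam)"

text \<open>Transfer operator on a preimage leaf: (L\<rho>)(x) = Jl x / Jf x * \<rho>(f x) * g(f x),
  where Jl = |det D(f|\<gamma>_j)|, Jf = |det Df|, g = g(Y_1(\<omega>),\<cdot>).\<close>
definition transfer_op :: "('a \<Rightarrow> real) \<Rightarrow> ('a \<Rightarrow> real) \<Rightarrow> ('a \<Rightarrow> 'a) \<Rightarrow> ('a \<Rightarrow> real) \<Rightarrow> ('a \<Rightarrow> real) \<Rightarrow> 'a \<Rightarrow> real" where
  "transfer_op Jl Jf f g \<rho> x = Jl x / Jf x * \<rho> (f x) * g (f x)"

end

theory Submission
  imports Defs
begin

text \<open>Two positive functions \<rho>1, \<rho>2 in the cone D(l a) on a set of diameter at most 1 have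
  ratio \<rho>2/\<rho>1 within a factor exp(2 l a) of r = \<rho>2(y0)/\<rho>1(y0). With z = exp(a d(x,y)^\<mu>) the
  cone condition for \<rho>2 - t \<rho>1 reduces, via the Hoelder bounds of \<rho>1 and \<rho>2 with constant l a,
  to t \<rho>1(y) (z - z^-l) \<le> \<rho>2(y) (z - z^l); this is why t = \<tau>1 r exp(-2 l a) lies below \<rho>2 and
  s = \<tau>2 r exp(2 l a) above it in the order of D(a), so that \<theta>_a \<le> log(s/t) = log(\<tau>2/\<tau>1) + 4 l a.
  Convexity of exp bounds (z - z^l)/(z - z^-l) below by (1 - l)/(1 + l), so \<tau>1 > 0 and \<tau>2 < \<infinity>.
  The transfer operator multiplies \<rho> \<circ> f, with f a contraction, by log-Lipschitz factors and
  thus maps D(a') into D(l a) with l a = (a' + G) lam_s^\<mu> + K1 + K2.\<close>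

lemma exp_mult_le_chord:
  fixes t x :: real
  assumes "0 \<le> t" "t \<le> 1"
  shows "exp (t * x) \<le> 1 - t + t * exp x"
  using convex_onD[OF exp_convex assms, of 0 x] by simp

lemma powr_less_self:
  fixes z e :: real
  assumes "1 < z" "e < 1"
  shows "z powr e < z"
  using powr_less_mono[OF assms(2,1)] assms(1) by simp

lemma powr_diff_ratio_lower_bound:
  fixes l z :: real
  assumes l: "0 < l" "l < 1" and z: "1 < z"
  shows "(1 - l) / (1 + l) * (z - z powr (-l)) \<le> z - z powr l"
proof -
  define t where "t = (1 - l) / (1 + l)"
  have t: "0 \<le> t" "t \<le> 1" using l by (auto simp: t_def)
  have "t * (-(1 + l) * ln z) = -(1 - l) * ln z" using l by (simp add: t_def field_simps)
  then have chord: "exp (-(1 - l) * ln z) \<le> 1 - t + t * exp (-(1 + l) * ln z)"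
    using exp_mult_le_chord[OF t] by metis
  have z_exp: "z * exp (c * ln z) = z powr (1 + c)" for c
    using z by (simp add: powr_def distrib_right exp_add)
  have "z powr l = z * exp (-(1 - l) * ln z)" using z_exp[of "-(1 - l)"] by simp
  also have "\<dots> \<le> z * (1 - t + t * exp (-(1 + l) * ln z))" using chord z by simp
  also have "\<dots> = z - t * (z - z powr (-l))" using z_exp[of "-(1 + l)"] by (simp add: algebra_simps)
  finally show ?thesis by (simp add: t_def)
qed

lemma
  fixes l :: real
  assumes l: "0 < l" "l < 1"
  shows tau1_pos: "0 < tau1 l"
    and tau1_mult_le: "\<And>z. 1 < z \<Longrightarrow> tau1 l * (z - z powr (-l)) \<le> z - z powr l"
    and tau1_less_one: "tau1 l < 1"
proof -
  have den_pos: "0 < z - z powr (-l)" if "1 < z" for z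
    using powr_less_self[OF that] l by simp
  have lower: "(1 - l) / (1 + l) \<le> r" if "r \<in> tau1_set l" for r
    using that powr_diff_ratio_lower_bound[OF l] den_pos
    by (auto simp: tau1_set_def pos_le_divide_eq)
  have bdd: "bdd_below (tau1_set l)" using lower by (auto simp: bdd_below_def)
  have two: "(2 - 2 powr l) / (2 - 2 powr (-l)) \<in> tau1_set l" by (auto simp: tau1_set_def)
  have "(1 - l) / (1 + l) \<le> tau1 l"
    unfolding tau1_def using two lower by (intro cInf_greatest) auto
  then show "0 < tau1 l" using l by (auto intro: less_le_trans[rotated])
  show "tau1 l * (z - z powr (-l)) \<le> z - z powr l" if "1 < z" for z
  proof -
    have "tau1 l \<le> (z - z powr l) / (z - z powr (-l))"
      unfolding tau1_def using that by (intro cInf_lower[OF _ bdd]) (auto simp: tau1_set_def)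
    then show ?thesis using den_pos[OF that] by (simp add: pos_le_divide_eq)
  qed
  have "2 powr (-l) < 2 powr l" using l by (intro powr_less_mono) auto
  then have "(2 - 2 powr l) / (2 - 2 powr (-l)) < 1" using den_pos[of 2] by simp
  then show "tau1 l < 1"
    unfolding tau1_def using two bdd by (intro le_less_trans[OF cInf_lower])
qed

lemma
  fixes l :: real
  assumes l: "0 < l" "l < 1"
  shows bdd_above_tau2_set: "bdd_above (tau2_set l)"
    and le_tau2_mult: "\<And>z. 1 < z \<Longrightarrow> z - z powr (-l) \<le> tau2 l * (z - z powr l)"
    and one_less_tau2: "1 < tau2 l"
proof -
  have num_pos: "0 < z - z powr l" if "1 < z" for z
    using powr_less_self[OF that] l by simp
  have "(z - z powr (-l)) / (z - z powr l) \<le> (1 + l) / (1 - l)" if "1 < z" for z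
  proof -
    have "(1 - l) * (z - z powr (-l)) \<le> (1 + l) * (z - z powr l)"
      using powr_diff_ratio_lower_bound[OF l that] l by (simp add: field_simps)
    then show ?thesis using num_pos[OF that] l by (simp add: frac_le_eq divide_simps mult.commute)
  qed
  then have "r \<le> (1 + l) / (1 - l)" if "r \<in> tau2_set l" for r
    using that by (auto simp: tau2_set_def)
  then show bdd: "bdd_above (tau2_set l)" by (auto simp: bdd_above_def)
  show "z - z powr (-l) \<le> tau2 l * (z - z powr l)" if "1 < z" for z
  proof -
    have "(z - z powr (-l)) / (z - z powr l) \<le> tau2 l"
      unfolding tau2_def using that by (intro cSup_upper[OF _ bdd]) (auto simp: tau2_set_def)
    then show ?thesis using num_pos[OF that] by (simp add: pos_divide_le_eq)
  qed
  have "2 powr (-l) < 2 powr l" using l by (intro powr_less_mono) auto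
  then have "1 < (2 - 2 powr (-l)) / (2 - 2 powr l)" using num_pos[of 2] by simp
  also have "\<dots> \<le> tau2 l"
    unfolding tau2_def by (intro cSup_upper[OF _ bdd]) (auto simp: tau2_set_def)
  finally show "1 < tau2 l" .
qed

lemma le_powr_of_le_one:
  fixes x \<mu> :: real
  assumes "0 \<le> x" "x \<le> 1" "\<mu> \<le> 1"
  shows "x \<le> x powr \<mu>"
  using powr_mono'[OF assms(3,1,2)] assms(1) by (cases "x = 0") auto

lemma holder_cone_le_exp:
  assumes "\<rho> \<in> holder_cone b \<mu> S" "0 \<le> b" "0 \<le> \<mu>" "x \<in> S" "y \<in> S" "dist x y \<le> 1"
  shows "\<rho> x \<le> \<rho> y * exp b"
proof -
  have "\<rho> x \<le> \<rho> y * exp (b * dist x y powr \<mu>)" using assms by (auto simp: holder_cone_def)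
  also have "\<dots> \<le> \<rho> y * exp b"
    using assms by (auto simp: holder_cone_def mult_left_le powr_le1 less_imp_le)
  finally show ?thesis .
qed

lemma holder_cone_scale:
  assumes "\<rho> \<in> holder_cone b \<mu> S" "0 < c"
  shows "(\<lambda>x. c * \<rho> x) \<in> holder_cone b \<mu> S"
  using assms by (auto simp: holder_cone_def mult.assoc)

lemma holder_cone_mult:
  assumes "\<rho> \<in> holder_cone b \<mu> S" "\<sigma> \<in> holder_cone c \<mu> S"
  shows "(\<lambda>x. \<rho> x * \<sigma> x) \<in> holder_cone (b + c) \<mu> S"
proof -
  have "\<rho> x * \<sigma> x \<le> (\<rho> y * exp (b * d)) * (\<sigma> y * exp (c * d))"
    if "x \<in> S" "y \<in> S" "d = dist x y powr \<mu>" for x y d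
    using assms that by (intro mult_mono) (auto simp: holder_cone_def less_imp_le)
  then show ?thesis
    using assms by (auto simp: holder_cone_def distrib_right exp_add mult_ac)
qed

lemma holder_cone_inverse:
  assumes "\<rho> \<in> holder_cone b \<mu> S"
  shows "(\<lambda>x. inverse (\<rho> x)) \<in> holder_cone b \<mu> S"
proof -
  have "inverse (\<rho> x) \<le> inverse (\<rho> y) * exp (b * dist x y powr \<mu>)" if "x \<in> S" "y \<in> S" for x y
  proof -
    have "\<rho> y \<le> \<rho> x * exp (b * dist y x powr \<mu>)" "0 < \<rho> x" "0 < \<rho> y"
      using assms that by (auto simp: holder_cone_def)
    then show ?thesis by (simp add: dist_commute field_simps)
  qed
  then show ?thesis using assms by (auto simp: holder_cone_def)
qed

lemma holder_cone_comp:
  assumes "\<rho> \<in> holder_cone b \<mu> T" "0 \<le> b" "0 \<le> \<mu>" "0 \<le> lam"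
    and "f ` S \<subseteq> T" and "\<forall>x\<in>S. \<forall>y\<in>S. dist (f x) (f y) \<le> lam * dist x y"
  shows "(\<lambda>x. \<rho> (f x)) \<in> holder_cone (b * lam powr \<mu>) \<mu> S"
proof -
  have "\<rho> (f x) \<le> \<rho> (f y) * exp (b * lam powr \<mu> * dist x y powr \<mu>)" if "x \<in> S" "y \<in> S" for x y
  proof -
    have "dist (f x) (f y) powr \<mu> \<le> (lam * dist x y) powr \<mu>"
      using assms that by (intro powr_mono2) auto
    then have le: "b * dist (f x) (f y) powr \<mu> \<le> b * lam powr \<mu> * dist x y powr \<mu>"
      using assms by (simp add: powr_mult mult_left_mono mult.assoc)
    have fT: "f x \<in> T" "f y \<in> T" using assms(5) that by auto
    then have pos: "0 < \<rho> (f y)" using assms(1) by (simp add: holder_cone_def)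
    have "\<rho> (f x) \<le> \<rho> (f y) * exp (b * dist (f x) (f y) powr \<mu>)"
      using assms(1) fT by (simp add: holder_cone_def)
    also have "\<dots> \<le> \<rho> (f y) * exp (b * lam powr \<mu> * dist x y powr \<mu>)"
      using le pos by simp
    finally show ?thesis .
  qed
  then show ?thesis using assms by (auto simp: holder_cone_def)
qed

lemma holder_cone_of_log_lipschitz:
  assumes "\<forall>x\<in>S. 0 < g x" "\<forall>x\<in>S. \<forall>y\<in>S. \<bar>ln (g x) - ln (g y)\<bar> \<le> K * dist x y"
    and "\<forall>x\<in>S. \<forall>y\<in>S. dist x y \<le> 1" "0 \<le> K" "\<mu> \<le> 1"
  shows "g \<in> holder_cone K \<mu> S"
proof -
  have "g x \<le> g y * exp (K * dist x y powr \<mu>)" if "x \<in> S" "y \<in> S" for x y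
  proof -
    have "ln (g x) \<le> ln (g y) + K * dist x y" using assms that by force
    also have "\<dots> \<le> ln (g y) + K * dist x y powr \<mu>"
      using assms that le_powr_of_le_one[of "dist x y" \<mu>] by (simp add: mult_left_mono)
    finally have "exp (ln (g x)) \<le> exp (ln (g y)) * exp (K * dist x y powr \<mu>)"
      by (simp flip: exp_add)
    then show ?thesis using assms that by simp
  qed
  then show ?thesis using assms by (auto simp: holder_cone_def)
qed

lemma transfer_op_holder_cone:
  assumes "Jl \<in> holder_cone cl \<mu> S" "Jf \<in> holder_cone cf \<mu> S"
    and "\<rho> \<in> holder_cone b \<mu> T" "g \<in> holder_cone cg \<mu> T"
    and "0 \<le> b" "0 \<le> cg" "0 \<le> \<mu>" "0 \<le> lam"
    and "f ` S \<subseteq> T" "\<forall>x\<in>S. \<forall>y\<in>S. dist (f x) (f y) \<le> lam * dist x y"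
  shows "transfer_op Jl Jf f g \<rho> \<in> holder_cone (cl + cf + (b + cg) * lam powr \<mu>) \<mu> S"
proof -
  have "(\<lambda>x. Jl x * inverse (Jf x) * (\<rho> (f x) * g (f x)))
      \<in> holder_cone (cl + cf + (b + cg) * lam powr \<mu>) \<mu> S"
    using assms by (intro holder_cone_mult holder_cone_inverse holder_cone_comp) auto
  moreover have "transfer_op Jl Jf f g \<rho> = (\<lambda>x. Jl x * inverse (Jf x) * (\<rho> (f x) * g (f x)))"
    by (auto simp: transfer_op_def divide_inverse)
  ultimately show ?thesis by simp
qed

lemma holder_cone_diff:
  assumes "0 \<le> a" "v \<in> holder_cone (l * a) \<mu> S" "w \<in> holder_cone (l * a) \<mu> S"
    and "\<forall>x\<in>S. v x < w x"
    and "\<forall>y\<in>S. \<forall>z>1. v y * (z - z powr (-l)) \<le> w y * (z - z powr l)"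
  shows "(\<lambda>x. w x - v x) \<in> holder_cone a \<mu> S"
proof -
  have "w x - v x \<le> (w y - v y) * exp u" if "x \<in> S" "y \<in> S" "u = a * dist x y powr \<mu>" for x y u
  proof -
    have w: "w x \<le> w y * exp (l * u)" and v: "v y \<le> v x * exp (l * u)"
      using assms(2,3) that by (auto simp: holder_cone_def dist_commute mult_ac)
    show ?thesis
    proof (cases "u = 0")
      case True
      then show ?thesis using v w by simp
    next
      case False
      then have u: "0 < u" using assms(1) that(3) by simp
      have "exp u powr l = exp (l * u)" "exp u powr (-l) = inverse (exp (l * u))"
        by (simp_all add: powr_def exp_minus)
      moreover have "1 < exp u" using u by simp
      ultimately have "v y * (exp u - inverse (exp (l * u))) \<le> w y * (exp u - exp (l * u))"
        using assms(5) that(2) by metis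
      moreover have "v y * inverse (exp (l * u)) \<le> v x"
        using v by (simp add: field_simps)
      ultimately show ?thesis
        using w by (simp add: algebra_simps)
    qed
  qed
  then show ?thesis using assms by (auto simp: holder_cone_def)
qed

lemma cone_le_imp_le:
  assumes "cone_le a \<mu> \<Gamma> v w" "x \<in> \<Gamma>"
  shows "v x \<le> w x"
  using assms by (auto simp: cone_le_def holder_cone_def less_imp_le)

lemma hilbert_theta_le_ln:
  assumes "y0 \<in> \<Gamma>" "0 < \<rho>1 y0"
    and t: "t \<in> theta_alpha_set a \<mu> \<Gamma> \<rho>1 \<rho>2" and s: "s \<in> theta_beta_set a \<mu> \<Gamma> \<rho>1 \<rho>2"
  shows "hilbert_theta a \<mu> \<Gamma> \<rho>1 \<rho>2 \<le> ereal (ln (s / t))"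
proof -
  define A where "A = theta_alpha_set a \<mu> \<Gamma> \<rho>1 \<rho>2"
  define B where "B = theta_beta_set a \<mu> \<Gamma> \<rho>1 \<rho>2"
  define r where "r = \<rho>2 y0 / \<rho>1 y0"
  have A_le: "t' \<le> r" if "t' \<in> A" for t'
    using that cone_le_imp_le[of a \<mu> \<Gamma> _ \<rho>2 y0] assms(1,2)
    by (auto simp: A_def theta_alpha_set_def r_def pos_le_divide_eq)
  have B_ge: "r \<le> s'" if "s' \<in> B" for s'
    using that cone_le_imp_le[of a \<mu> \<Gamma> \<rho>2 _ y0] assms(1,2)
    by (auto simp: B_def theta_beta_set_def r_def pos_divide_le_eq)
  have "t \<in> A" "s \<in> B" "0 < t" using t s by (auto simp: A_def B_def theta_alpha_set_def)
  have bdd: "bdd_above A" using A_le by (auto simp: bdd_above_def)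
  have "t \<le> Sup A" using \<open>t \<in> A\<close> bdd by (rule cSup_upper)
  moreover have "Sup A \<le> r" using \<open>t \<in> A\<close> A_le by (intro cSup_least) auto
  moreover have "r \<le> Inf B" using \<open>s \<in> B\<close> B_ge by (intro cInf_greatest) auto
  moreover have "Inf B \<le> s" using \<open>s \<in> B\<close> B_ge by (intro cInf_lower) (auto simp: bdd_below_def)
  ultimately have "ln (Inf B / Sup A) \<le> ln (s / t)"
    using \<open>0 < t\<close> by (intro ln_mono divide_pos_pos frac_le) auto
  moreover have "hilbert_theta a \<mu> \<Gamma> \<rho>1 \<rho>2 = ereal (ln (Inf B / Sup A))"
    using \<open>t \<in> A\<close> \<open>s \<in> B\<close> bdd by (auto simp: hilbert_theta_def A_def B_def)
  ultimately show ?thesis by simp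
qed

lemma tau1_mult_mem_theta_alpha_set:
  assumes "0 \<le> a" "0 < l" "l < 1"
    and \<rho>1: "\<rho>1 \<in> holder_cone (l * a) \<mu> \<Gamma>" and \<rho>2: "\<rho>2 \<in> holder_cone (l * a) \<mu> \<Gamma>"
    and m: "0 < m" "\<forall>x\<in>\<Gamma>. m * \<rho>1 x \<le> \<rho>2 x"
  shows "tau1 l * m \<in> theta_alpha_set a \<mu> \<Gamma> \<rho>1 \<rho>2"
proof -
  define t where "t = tau1 l * m"
  have t: "0 < t" "t < m" using tau1_pos tau1_less_one assms(2,3) m(1) by (simp_all add: t_def)
  have "(\<lambda>x. \<rho>2 x - t * \<rho>1 x) \<in> holder_cone a \<mu> \<Gamma>"
  proof (rule holder_cone_diff[OF assms(1) holder_cone_scale[OF \<rho>1 \<open>0 < t\<close>] \<rho>2]; intro ballI allI impI)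
    fix x assume "x \<in> \<Gamma>"
    then have "t * \<rho>1 x < m * \<rho>1 x" using \<rho>1 t(2) by (simp add: holder_cone_def)
    then show "t * \<rho>1 x < \<rho>2 x" using m(2) \<open>x \<in> \<Gamma>\<close> by fastforce
  next
    fix y and z :: real assume "y \<in> \<Gamma>" "1 < z"
    then have "0 < \<rho>1 y" "0 < z - z powr l" using \<rho>1 powr_less_self[of z l] assms(3)
      by (auto simp: holder_cone_def)
    have "t * \<rho>1 y * (z - z powr (-l)) = m * \<rho>1 y * (tau1 l * (z - z powr (-l)))"
      by (simp add: t_def)
    also have "\<dots> \<le> m * \<rho>1 y * (z - z powr l)"
      using tau1_mult_le[OF assms(2,3) \<open>1 < z\<close>] \<open>0 < \<rho>1 y\<close> m(1) by (intro mult_left_mono) auto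
    also have "\<dots> \<le> \<rho>2 y * (z - z powr l)"
      using m(2) \<open>y \<in> \<Gamma>\<close> \<open>0 < z - z powr l\<close> by (intro mult_right_mono) auto
    finally show "t * \<rho>1 y * (z - z powr (-l)) \<le> \<rho>2 y * (z - z powr l)" .
  qed
  then show ?thesis using t by (simp add: t_def[symmetric] theta_alpha_set_def cone_le_def)
qed

lemma tau2_mult_mem_theta_beta_set:
  assumes "0 \<le> a" "0 < l" "l < 1"
    and \<rho>1: "\<rho>1 \<in> holder_cone (l * a) \<mu> \<Gamma>" and \<rho>2: "\<rho>2 \<in> holder_cone (l * a) \<mu> \<Gamma>"
    and M: "0 < M" "\<forall>x\<in>\<Gamma>. \<rho>2 x \<le> M * \<rho>1 x"
  shows "tau2 l * M \<in> theta_beta_set a \<mu> \<Gamma> \<rho>1 \<rho>2"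
proof -
  define s where "s = tau2 l * M"
  have s: "0 < s" "M < s" using one_less_tau2[OF assms(2,3)] M(1) by (simp_all add: s_def)
  have "(\<lambda>x. s * \<rho>1 x - \<rho>2 x) \<in> holder_cone a \<mu> \<Gamma>"
  proof (rule holder_cone_diff[OF assms(1) \<rho>2 holder_cone_scale[OF \<rho>1 \<open>0 < s\<close>]]; intro ballI allI impI)
    fix x assume "x \<in> \<Gamma>"
    then have "M * \<rho>1 x < s * \<rho>1 x" using \<rho>1 s(2) by (simp add: holder_cone_def)
    then show "\<rho>2 x < s * \<rho>1 x" using M(2) \<open>x \<in> \<Gamma>\<close> by fastforce
  next
    fix y and z :: real assume "y \<in> \<Gamma>" "1 < z"
    then have "0 < \<rho>2 y" "0 < z - z powr l" using \<rho>2 powr_less_self[of z l] assms(3)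
      by (auto simp: holder_cone_def)
    have "\<rho>2 y * (z - z powr (-l)) \<le> \<rho>2 y * (tau2 l * (z - z powr l))"
      using le_tau2_mult[OF assms(2,3) \<open>1 < z\<close>] \<open>0 < \<rho>2 y\<close> by simp
    also have "\<dots> \<le> M * \<rho>1 y * (tau2 l * (z - z powr l))"
      using M(2) \<open>y \<in> \<Gamma>\<close> \<open>0 < z - z powr l\<close> one_less_tau2[OF assms(2,3)]
      by (intro mult_right_mono) auto
    also have "\<dots> = s * \<rho>1 y * (z - z powr l)" by (simp add: s_def)
    finally show "\<rho>2 y * (z - z powr (-l)) \<le> s * \<rho>1 y * (z - z powr l)" .
  qed
  then show ?thesis using s by (simp add: s_def[symmetric] theta_beta_set_def cone_le_def)
qed

lemma hilbert_theta_holder_cone_le_Dbound: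
  assumes a: "0 < a" and \<mu>: "0 \<le> \<mu>" and l: "0 < l" "l < 1"
    and \<Gamma>: "\<Gamma> \<noteq> {}" "\<forall>x\<in>\<Gamma>. \<forall>y\<in>\<Gamma>. dist x y \<le> 1"
    and \<rho>1: "\<rho>1 \<in> holder_cone (l * a) \<mu> \<Gamma>" and \<rho>2: "\<rho>2 \<in> holder_cone (l * a) \<mu> \<Gamma>"
  shows "hilbert_theta a \<mu> \<Gamma> \<rho>1 \<rho>2 \<le> ereal (Dbound a l)"
proof -
  obtain y0 where y0: "y0 \<in> \<Gamma>" using \<Gamma>(1) by blast
  define b where "b = l * a"
  define r where "r = \<rho>2 y0 / \<rho>1 y0"
  have b: "0 \<le> b" "b \<le> a" using a l by (simp_all add: b_def)
  have exp2b: "exp (2 * b) = exp b * exp b" by (simp flip: exp_add mult_2)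
  have pos: "0 < \<rho>1 x" "0 < \<rho>2 x" if "x \<in> \<Gamma>" for x
    using \<rho>1 \<rho>2 that by (auto simp: holder_cone_def)
  have near: "\<rho> x \<le> \<rho> y * exp b" if "\<rho> \<in> {\<rho>1, \<rho>2}" "x \<in> \<Gamma>" "y \<in> \<Gamma>" for \<rho> x y
    using that \<rho>1 \<rho>2 \<Gamma>(2) b \<mu> by (auto simp: b_def intro: holder_cone_le_exp)
  have lower: "r / exp (2 * b) * \<rho>1 x \<le> \<rho>2 x" if "x \<in> \<Gamma>" for x
  proof -
    have "\<rho>2 y0 * \<rho>1 x \<le> (\<rho>2 x * exp b) * (\<rho>1 y0 * exp b)"
      using near that y0 pos by (intro mult_mono) (auto simp: less_imp_le)
    then show ?thesis unfolding exp2b using pos that y0 by (simp add: r_def field_simps)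
  qed
  have upper: "\<rho>2 x \<le> r * exp (2 * b) * \<rho>1 x" if "x \<in> \<Gamma>" for x
  proof -
    have "\<rho>2 x * \<rho>1 y0 \<le> (\<rho>2 y0 * exp b) * (\<rho>1 x * exp b)"
      using near that y0 pos by (intro mult_mono) (auto simp: less_imp_le)
    then show ?thesis unfolding exp2b using pos that y0 by (simp add: r_def field_simps)
  qed
  have "0 < r" using pos y0 by (simp add: r_def)
  have "hilbert_theta a \<mu> \<Gamma> \<rho>1 \<rho>2
      \<le> ereal (ln (tau2 l * (r * exp (2 * b)) / (tau1 l * (r / exp (2 * b)))))"
    using y0 pos lower upper \<open>0 < r\<close> a l \<rho>1 \<rho>2
    by (intro hilbert_theta_le_ln tau1_mult_mem_theta_alpha_set tau2_mult_mem_theta_beta_set)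
      (auto simp: b_def)
  also have "tau2 l * (r * exp (2 * b)) / (tau1 l * (r / exp (2 * b))) = tau2 l / tau1 l * exp (4 * b)"
    using \<open>0 < r\<close> by (simp add: field_simps flip: exp_add)
  also have "ln \<dots> = ln (tau2 l / tau1 l) + 4 * b"
    using tau1_pos[OF l] one_less_tau2[OF l] by (subst ln_mult) auto
  also have "\<dots> \<le> Dbound a l" using b by (simp add: Dbound_def)
  finally show ?thesis by simp
qed

theorem lemma4p6:
  fixes Q \<gamma> \<gamma>j :: "'a::metric_space set"
    and f :: "'a \<Rightarrow> 'a" and Jf Jl g :: "'a \<Rightarrow> real"
    and a a' \<mu> lam_s G K1 K2 :: real
  assumes a_pos: "0 < a" and mu: "0 < \<mu>" "\<mu> \<le> 1"
    and Q_diam: "\<forall>x\<in>Q. \<forall>y\<in>Q. dist x y \<le> 1"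
    and lams: "0 < lam_s" "lam_s < 1"
    and leaves: "\<gamma> \<subseteq> Q" "\<gamma> \<noteq> {}" "\<gamma>j \<subseteq> Q" "\<gamma>j \<noteq> {}"
    and f_maps: "f ` \<gamma>j \<subseteq> \<gamma>"
    and f_contr: "\<forall>x\<in>\<gamma>j. \<forall>y\<in>\<gamma>j. dist (f x) (f y) \<le> lam_s * dist x y"
    and Jf_pos: "\<forall>x\<in>Q. 0 < Jf x"
    and Jf_lip: "\<forall>x\<in>Q. \<forall>y\<in>Q. \<bar>ln (Jf x) - ln (Jf y)\<bar> \<le> K1 * dist x y"
    and Jl_pos: "\<forall>x\<in>\<gamma>j. 0 < Jl x"
    and Jl_lip: "\<forall>x\<in>\<gamma>j. \<forall>y\<in>\<gamma>j. \<bar>ln (Jl x) - ln (Jl y)\<bar> \<le> K2 * dist x y"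
    and g_pos: "\<forall>x\<in>Q. 0 < g x"
    and g_lip: "\<forall>x\<in>Q. \<forall>y\<in>Q. \<bar>ln (g x) - ln (g y)\<bar> \<le> G * dist x y"
    and consts_nonneg: "0 \<le> G" "0 \<le> K1" "0 \<le> K2"
    and a'_pos: "0 < a'"
    and lam_lt: "(a' + (G + (K1 + K2) / lam_s powr \<mu>)) * lam_s powr \<mu> / a < 1"
  shows "(\<forall>lam. \<forall>\<Gamma>. 0 < lam \<and> lam < 1 \<and> \<Gamma> \<subseteq> Q \<and> \<Gamma> \<noteq> {} \<longrightarrow>
            0 < tau1 lam \<and> bdd_above (tau2_set lam) \<and>
            (\<forall>\<rho>1\<in>holder_cone (lam * a) \<mu> \<Gamma>. \<forall>\<rho>2\<in>holder_cone (lam * a) \<mu> \<Gamma>.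
               hilbert_theta a \<mu> \<Gamma> \<rho>1 \<rho>2 \<le> ereal (Dbound a lam)))
       \<and> (\<forall>\<rho>1\<in>holder_cone a' \<mu> \<gamma>. \<forall>\<rho>2\<in>holder_cone a' \<mu> \<gamma>.
            hilbert_theta a \<mu> \<gamma>j (transfer_op Jl Jf f g \<rho>1) (transfer_op Jl Jf f g \<rho>2)
              \<le> ereal (Dbound a ((a' + (G + (K1 + K2) / lam_s powr \<mu>)) * lam_s powr \<mu> / a)))"
proof -
  define lam where "lam = (a' + (G + (K1 + K2) / lam_s powr \<mu>)) * lam_s powr \<mu> / a"
  have diam: "\<forall>x\<in>S. \<forall>y\<in>S. dist x y \<le> 1" if "S \<subseteq> Q" for S
    using Q_diam that by blast
  have lam_a: "lam * a = K2 + K1 + (a' + G) * lam_s powr \<mu>"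
    using a_pos lams by (simp add: lam_def field_simps)
  have "0 < lam * a" unfolding lam_a using lams a'_pos consts_nonneg by (simp add: add_nonneg_pos)
  then have lam: "0 < lam" "lam < 1"
    using a_pos lam_lt by (simp_all add: lam_def zero_less_mult_iff)
  have Jl: "Jl \<in> holder_cone K2 \<mu> \<gamma>j"
    using Jl_pos Jl_lip diam[OF leaves(3)] consts_nonneg mu by (intro holder_cone_of_log_lipschitz)
  have Jf: "Jf \<in> holder_cone K1 \<mu> \<gamma>j"
    using Jf_pos Jf_lip leaves(3) diam[OF leaves(3)] consts_nonneg mu
    by (intro holder_cone_of_log_lipschitz) (auto simp: subset_iff)
  have g: "g \<in> holder_cone G \<mu> \<gamma>"
    using g_pos g_lip leaves(1) diam[OF leaves(1)] consts_nonneg mu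
    by (intro holder_cone_of_log_lipschitz) (auto simp: subset_iff)
  have "transfer_op Jl Jf f g \<rho> \<in> holder_cone (lam * a) \<mu> \<gamma>j" if "\<rho> \<in> holder_cone a' \<mu> \<gamma>" for \<rho>
    unfolding lam_a using a'_pos consts_nonneg mu lams f_maps f_contr
    by (intro transfer_op_holder_cone[OF Jl Jf that g]) auto
  then have "hilbert_theta a \<mu> \<gamma>j (transfer_op Jl Jf f g \<rho>1) (transfer_op Jl Jf f g \<rho>2) \<le> ereal (Dbound a lam)"
    if "\<rho>1 \<in> holder_cone a' \<mu> \<gamma>" "\<rho>2 \<in> holder_cone a' \<mu> \<gamma>" for \<rho>1 \<rho>2
    using that a_pos mu lam leaves diam[of \<gamma>j] by (intro hilbert_theta_holder_cone_le_Dbound) auto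
  moreover have "hilbert_theta a \<mu> \<Gamma> \<rho>1 \<rho>2 \<le> ereal (Dbound a l)"
    if "0 < l" "l < 1" "\<Gamma> \<subseteq> Q" "\<Gamma> \<noteq> {}" "\<rho>1 \<in> holder_cone (l * a) \<mu> \<Gamma>" "\<rho>2 \<in> holder_cone (l * a) \<mu> \<Gamma>"
    for l \<Gamma> \<rho>1 \<rho>2
    using that a_pos mu diam[of \<Gamma>] by (intro hilbert_theta_holder_cone_le_Dbound) auto
  ultimately show ?thesis
    using tau1_pos bdd_above_tau2_set by (auto simp: lam_def)
qed

end
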